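(* Let $(\Omega,\mathcal F,\mathbb P)$ be nonatomic, $X$ a random vector in $\mathbb R^N$ and $Y$ a real random variable, with $\nu=\mathrm{Law}(X,Y)$ compactly supported, $m=\mathrm{Law}(X)$, $\nu=m\otimes\nu^x$ where $\nu^x$ is the conditional law of $Y$ given $X=x$, and $\mu$ the uniform measure on $[0,1]$. Let $F(x,y)=\mathbb P(Y\le y\mid X=x)$ and $Q(x,t)=\inf\{\alpha\in\mathbb R: F(x,\alpha)>t\}$. Assume that for $m$-a.e. $x$, $t\mapsto Q(x,t)$ is continuous and increasing, and that $\mathbb P(Y=\alpha+\beta\cdot X)=0$ for every $(\alpha,\beta)\in\mathbb R^{1+N}$. Consider $$(P_1)\qquad \max_{\theta\in I(\nu,\mu)}\int u\,y\ \theta(dx,dy,du),$$ where $I(\nu,\mu)$ is the set of probability measures $\theta$ on $\mathbb R^{N+1}\times[0,1]$ whose $(x,y)$-marginal is $\nu$ and whose $(x,u)$-marginal is $m\otimes\mu$, and $$(D_1)\qquad \inf\Big\{\int\varphi(x,u)\,m(dx)\mu(du)+\int\psi(x,y)\,\nu(dx,dy)\ :\ \varphi(x,u)+\psi(x,y)\ge uy\Big\}.$$ Let $(\varphi,\psi)$ solve $(D_1)$ with, for $m$-a.e. $x$, $\varphi(x,\cdot)$ and $\psi(x,\cdot)$ convex conjugate to each other: $\varphi(x,u)=\sup_y\{uy-\psi(x,y)\}$, $\psi(x,y)=\sup_{u\in[0,1]}\{uy-\varphi(x,u)\}$. Then for $m$-a.e. $x$, $Q(x,\cdot)=\partial_u\varphi(x,\cdot)$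 and $F(x,\cdot)=\partial_y\psi(x,\cdot)$. Moreover, if $\theta$ solves $(P_1)$, then there is a unique random variable $U$ such that $\mathrm{Law}(X,Y,U)=\theta$ (so $U$ is uniformly distributed on $[0,1]$ and independent of $X$); it is given by $U=F(X,Y)$ and satisfies $Y=\partial_u\varphi(X,U)=Q(X,U)$ almost surely. *)

theory Defs
  imports "HOL-Probability.Probability"
begin

definition nonatomic :: "'w measure \<Rightarrow> bool" where
  "nonatomic M \<longleftrightarrow> (\<forall>A\<in>sets M. 0 < emeasure M A \<longrightarrow>
     (\<exists>B\<in>sets M. B \<subseteq> A \<and> 0 < emeasure M B \<and> emeasure M B < emeasure M A))"

definition unif01 :: "real measure" where
  "unif01 = uniform_measure lborel {0..1}"

text \<open>Conditional distribution function and conditional quantile function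
  of the kernel K (K x = conditional law of Y given X = x).\<close>
definition condF :: "('a \<Rightarrow> real measure) \<Rightarrow> 'a \<Rightarrow> real \<Rightarrow> real" where
  "condF K x y = measure (K x) {..y}"

definition condQ :: "('a \<Rightarrow> real measure) \<Rightarrow> 'a \<Rightarrow> real \<Rightarrow> real" where
  "condQ K x t = Inf {\<alpha>. condF K x \<alpha> > t}"

definition primal_feasible ::
  "('a::euclidean_space \<times> real) measure \<Rightarrow> 'a measure \<Rightarrow> (('a \<times> real) \<times> real) measure \<Rightarrow> bool" where
  "primal_feasible \<nu> m \<theta> \<longleftrightarrow>
     prob_space \<theta> \<and> sets \<theta> = sets borel \<and>
     distr \<theta> borel fst = \<nu> \<and>
     distr \<theta> borel (\<lambda>((x, y), u). (x, u)) = m \<Otimes>\<^sub>M unif01"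

definition primal_value :: "(('a::euclidean_space \<times> real) \<times> real) measure \<Rightarrow> real" where
  "primal_value \<theta> = (\<integral>((x, y), u). u * y \<partial>\<theta>)"

definition primal_optimal ::
  "('a::euclidean_space \<times> real) measure \<Rightarrow> 'a measure \<Rightarrow> (('a \<times> real) \<times> real) measure \<Rightarrow> bool" where
  "primal_optimal \<nu> m \<theta> \<longleftrightarrow> primal_feasible \<nu> m \<theta> \<and>
     (\<forall>\<theta>'. primal_feasible \<nu> m \<theta>' \<longrightarrow> primal_value \<theta>' \<le> primal_value \<theta>)"

definition dual_feasible ::
  "('a::euclidean_space \<times> real) measure \<Rightarrow> 'a measure \<Rightarrow> ('a \<Rightarrow> real \<Rightarrow> real) \<Rightarrow> ('a \<Rightarrow> real \<Rightarrow> real) \<Rightarrow> bool" where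
  "dual_feasible \<nu> m \<phi> \<psi> \<longleftrightarrow>
     integrable (m \<Otimes>\<^sub>M unif01) (\<lambda>(x, u). \<phi> x u) \<and>
     integrable \<nu> (\<lambda>(x, y). \<psi> x y) \<and>
     (\<forall>x y u. u \<in> {0..1} \<longrightarrow> u * y \<le> \<phi> x u + \<psi> x y)"

definition dual_value ::
  "('a::euclidean_space \<times> real) measure \<Rightarrow> 'a measure \<Rightarrow> ('a \<Rightarrow> real \<Rightarrow> real) \<Rightarrow> ('a \<Rightarrow> real \<Rightarrow> real) \<Rightarrow> real" where
  "dual_value \<nu> m \<phi> \<psi> =
     (\<integral>(x, u). \<phi> x u \<partial>(m \<Otimes>\<^sub>M unif01)) + (\<integral>(x, y). \<psi> x y \<partial>\<nu>)"

definition dual_optimal ::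
  "('a::euclidean_space \<times> real) measure \<Rightarrow> 'a measure \<Rightarrow> ('a \<Rightarrow> real \<Rightarrow> real) \<Rightarrow> ('a \<Rightarrow> real \<Rightarrow> real) \<Rightarrow> bool" where
  "dual_optimal \<nu> m \<phi> \<psi> \<longleftrightarrow> dual_feasible \<nu> m \<phi> \<psi> \<and>
     (\<forall>\<phi>' \<psi>'. dual_feasible \<nu> m \<phi>' \<psi>' \<longrightarrow> dual_value \<nu> m \<phi> \<psi> \<le> dual_value \<nu> m \<phi>' \<psi>')"

end

theory Submission
  imports Defs
begin

text \<open>
  Write \<open>F\<close> and \<open>Q\<close> for \<open>condF K\<close> and \<open>condQ K\<close>. The coupling \<open>(X, Y, F(X,Y))\<close> is admissible, because \<open>F(x,\<cdot>)\<close> pushes the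
  conditional law to the uniform law, and it is optimal, because the Legendre pair built from the
  integrated distribution function \<open>y \<mapsto> \<integral>\<^sub>-\<^sub>\<infinity>\<^sup>y F(x,s) ds\<close> attains the same value. Hence the
  duality gap \<open>\<phi>(X,U) + \<psi>(X,Y) - U Y\<close> vanishes almost surely for \<open>U = F(X,Y)\<close>. Since \<open>F(x,\<cdot>)\<close>
  reaches every level densely, continuity spreads this identity along the quantile curve:
  \<open>Q(x,t)\<close> is a subgradient of \<open>\<phi> x\<close> at \<open>t\<close> and \<open>F(x,y)\<close> one of \<open>\<psi> x\<close> at \<open>y\<close>, and
  continuity of these subgradients gives differentiability. For an optimal \<open>\<theta>\<close> the gap vanishes
  \<open>\<theta>\<close>-almost everywhere as well, so \<open>u\<close> is a subgradient of \<open>\<psi> x\<close> at \<open>y\<close>, i.e.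
  \<open>u = F(x,y)\<close>, and \<open>\<theta>\<close> is the law of \<open>(X, Y, F(X,Y))\<close>.
\<close>

lemma measurable_fst_borel [measurable]:
  "fst \<in> (borel :: ('a::second_countable_topology \<times> 'b::second_countable_topology) measure) \<rightarrow>\<^sub>M borel"
  using measurable_fst[of "borel :: 'a measure" "borel :: 'b measure"] by (simp add: borel_prod)

lemma measurable_snd_borel [measurable]:
  "snd \<in> (borel :: ('a::second_countable_topology \<times> 'b::second_countable_topology) measure) \<rightarrow>\<^sub>M borel"
  using measurable_snd[of "borel :: 'a measure" "borel :: 'b measure"] by (simp add: borel_prod)

lemma borel_measurable_uncurried_compose:
  fixes h :: "'a::second_countable_topology \<Rightarrow> 'b::second_countable_topology \<Rightarrow> 'c::topological_space"
  assumes "(\<lambda>z. h (fst z) (snd z)) \<in> borel_measurable borel"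
    and "f \<in> borel_measurable N" "g \<in> borel_measurable N"
  shows "(\<lambda>w. h (f w) (g w)) \<in> borel_measurable N"
  using measurable_compose[OF borel_measurable_Pair[OF assms(2,3)] assms(1)] by simp

lemma real_distribution_unif01: "real_distribution unif01"
  unfolding unif01_def real_distribution_def real_distribution_axioms_def
  by (auto intro!: prob_space_uniform_measure)

lemma sets_unif01 [measurable_cong]: "sets unif01 = sets borel"
  by (simp add: unif01_def)

lemma measure_unif01_Ioo: "0 \<le> a \<Longrightarrow> a \<le> b \<Longrightarrow> b \<le> 1 \<Longrightarrow> measure unif01 {a<..<b} = b - a"
  by (simp add: unif01_def measure_uniform_measure Int_absorb1 subset_eq)

lemma cdf_unif01: "cdf unif01 t = max 0 (min 1 t)"
proof -
  have "{0..1} \<inter> {..t} = (if t < 0 then {} else {0..min 1 t})" by auto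
  then show ?thesis by (simp add: cdf_def unif01_def measure_uniform_measure)
qed

lemma AE_unif01_Ioo: "AE u in unif01. 0 < u \<and> u < 1"
  unfolding unif01_def
proof (rule AE_uniform_measureI)
  show "AE u in lborel. u \<in> {0..1::real} \<longrightarrow> 0 < u \<and> u < 1"
    using AE_lborel_singleton[of "0::real"] AE_lborel_singleton[of "1::real"]
    by eventually_elim auto
qed simp

text \<open>Right continuity pins down a distribution function at a single point.\<close>

lemma cdf_unique_except_point:
  assumes M: "real_distribution M" and N: "real_distribution N"
    and eq: "\<And>t. t \<noteq> a \<Longrightarrow> cdf M t = cdf N t"
  shows "M = N"
proof (rule cdf_unique[OF M N], rule ext)
  fix t
  have lim: "(cdf L \<longlongrightarrow> cdf L a) (at_right a)" if "real_distribution L" for L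
    using finite_borel_measure.cdf_is_right_cont[OF real_distribution.finite_borel_measure_M[OF that]]
    by (simp add: continuous_within)
  have "\<forall>\<^sub>F s in at_right a. cdf M s = cdf N s"
    by (auto simp: eventually_at_filter eq)
  then have "(cdf N \<longlongrightarrow> cdf M a) (at_right a)"
    using lim[OF M] by (rule Lim_transform_eventually[rotated])
  then have "cdf M a = cdf N a"
    using lim[OF N] by (rule tendsto_unique[rotated 1]) (simp add: trivial_limit_at_right_real)
  then show "cdf M t = cdf N t" using eq by (cases "t = a") auto
qed

section \<open>Conditional distribution and quantile functions\<close>

definition regular_quantile :: "('a \<Rightarrow> real measure) \<Rightarrow> 'a \<Rightarrow> bool" where
  "regular_quantile K x \<longleftrightarrow>
    continuous_on {0<..<1} (condQ K x) \<and> strict_mono_on {0<..<1} (condQ K x)"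

lemma
  assumes "regular_quantile K x"
  shows condQ_continuous: "continuous_on {0<..<1} (condQ K x)"
    and condQ_strict_mono: "strict_mono_on {0<..<1} (condQ K x)"
  using assms by (simp_all add: regular_quantile_def)

context
  fixes K :: "'a \<Rightarrow> real measure" and x :: 'a
  assumes real_distribution: "real_distribution (K x)"
begin

interpretation Kx: real_distribution "K x" by (fact real_distribution)

lemma condF_eq_cdf: "condF K x = cdf (K x)"
  by (simp add: fun_eq_iff condF_def cdf_def)

lemma condF_mono: "y \<le> z \<Longrightarrow> condF K x y \<le> condF K x z"
  unfolding condF_eq_cdf by (rule Kx.cdf_nondecreasing)

lemma condF_nonneg: "0 \<le> condF K x y"
  unfolding condF_eq_cdf by (rule Kx.cdf_nonneg)

lemma condF_le_1: "condF K x y \<le> 1"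
  unfolding condF_eq_cdf by (rule Kx.cdf_bounded_prob)

lemma borel_measurable_condF: "condF K x \<in> borel_measurable borel"
  by (rule borel_measurable_mono) (simp add: mono_def condF_mono)

context
  fixes t :: real
  assumes t: "0 < t" "t < 1"
begin

lemma condF_exceeds_nonempty: "{\<alpha>. t < condF K x \<alpha>} \<noteq> {}"
proof -
  have "\<forall>\<^sub>F \<alpha> in at_top. t < condF K x \<alpha>"
    using Kx.cdf_lim_at_top_prob t unfolding condF_eq_cdf by (simp add: order_tendsto_iff)
  then show ?thesis by (auto simp: eventually_at_top_linorder)
qed

lemma condF_exceeds_bdd_below: "bdd_below {\<alpha>. t < condF K x \<alpha>}"
proof -
  have "\<forall>\<^sub>F \<alpha> in at_bot. condF K x \<alpha> < t"
    using Kx.cdf_lim_at_bot t unfolding condF_eq_cdf by (simp add: order_tendsto_iff)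
  then obtain b where "\<And>\<alpha>. \<alpha> \<le> b \<Longrightarrow> condF K x \<alpha> < t"
    by (auto simp: eventually_at_bot_linorder)
  then show ?thesis
    by (intro bdd_belowI[of _ b]) (metis mem_Collect_eq nle_le not_less_iff_gr_or_eq)
qed

lemma condQ_le: "t < condF K x \<alpha> \<Longrightarrow> condQ K x t \<le> \<alpha>"
  unfolding condQ_def by (rule cInf_lower[OF _ condF_exceeds_bdd_below]) simp

lemma le_condQ: "(\<And>\<alpha>. t < condF K x \<alpha> \<Longrightarrow> y \<le> \<alpha>) \<Longrightarrow> y \<le> condQ K x t"
  unfolding condQ_def by (rule cInf_greatest[OF condF_exceeds_nonempty]) simp

lemma less_condF_of_condQ_less: "condQ K x t < \<alpha> \<Longrightarrow> t < condF K x \<alpha>"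
proof -
  assume "condQ K x t < \<alpha>"
  then obtain \<beta> where "t < condF K x \<beta>" "\<beta> < \<alpha>"
    using cInf_less_iff[OF condF_exceeds_nonempty condF_exceeds_bdd_below] unfolding condQ_def
    by auto
  then show ?thesis using condF_mono[of \<beta> \<alpha>] by simp
qed

lemma le_condF_condQ: "t \<le> condF K x (condQ K x t)"
proof (rule tendsto_lowerbound)
  show "(condF K x \<longlongrightarrow> condF K x (condQ K x t)) (at_right (condQ K x t))"
    using Kx.cdf_is_right_cont unfolding condF_eq_cdf continuous_within by simp
  show "\<forall>\<^sub>F \<alpha> in at_right (condQ K x t). t \<le> condF K x \<alpha>"
    by (auto simp: eventually_at_right_field less_condF_of_condQ_less less_imp_le
        intro!: exI[of _ "condQ K x t + 1"])
qed simp

end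

context
  assumes regular: "regular_quantile K x"
begin

lemma condF_condQ:
  assumes t: "0 < t" "t < 1"
  shows "condF K x (condQ K x t) = t"
proof (rule ccontr)
  assume "condF K x (condQ K x t) \<noteq> t"
  with le_condF_condQ[OF t] have "t < condF K x (condQ K x t)" by simp
  then obtain t' where t': "t < t'" "t' < condF K x (condQ K x t)"
    using dense by blast
  then have "t' < 1" using condF_le_1[of "condQ K x t"] by simp
  then have "condQ K x t' \<le> condQ K x t" using t t' by (intro condQ_le) auto
  moreover have "condQ K x t < condQ K x t'"
    using t t' \<open>t' < 1\<close> by (intro strict_mono_onD[OF condQ_strict_mono[OF regular]]) auto
  ultimately show False by simp
qed

lemma condQ_condF:
  assumes y: "0 < condF K x y" "condF K x y < 1"
  shows "condQ K x (condF K x y) = y"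
proof (rule antisym)
  have "(condQ K x \<longlongrightarrow> condQ K x (condF K x y)) (at_left (condF K x y))"
    using condQ_continuous[OF regular] y
    by (auto simp: continuous_on_eq_continuous_at isCont_def filterlim_at_split)
  moreover have "\<forall>\<^sub>F s in at_left (condF K x y). condQ K x s \<le> y"
    using eventually_at_left_real[OF y(1)] by eventually_elim (use y in \<open>auto intro: condQ_le\<close>)
  ultimately show "condQ K x (condF K x y) \<le> y"
    by (rule tendsto_upperbound) (simp add: trivial_limit_at_left_real)
  show "y \<le> condQ K x (condF K x y)"
  proof (rule le_condQ[OF y])
    fix \<alpha> assume "condF K x y < condF K x \<alpha>"
    then show "y \<le> \<alpha>" using condF_mono[of \<alpha> y] by (cases "\<alpha> \<le> y") auto
  qed
qed

text \<open>An atom at \<open>y\<close> would make \<open>condQ K x\<close> constant on the gap between the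
  left limit and the value of \<open>condF K x\<close> at \<open>y\<close>.\<close>

lemma condF_no_atom: "measure (K x) {y} = 0"
proof (rule ccontr)
  define a where "a = measure (K x) {..<y}"
  have "0 \<le> a" by (simp add: a_def)
  have F_eq: "condF K x y = a + measure (K x) {y}"
    using Kx.finite_measure_Union[of "{..<y}" "{y}"]
    by (simp add: condF_def a_def ivl_disj_un_singleton(2)[symmetric] del: ivl_disj_un_singleton)
  assume "measure (K x) {y} \<noteq> 0"
  then have "a < condF K x y" by (simp add: F_eq zero_less_measure_iff)
  then obtain t1 where t1: "a < t1" "t1 < condF K x y" using dense by blast
  then obtain t2 where t2: "t1 < t2" "t2 < condF K x y" using dense by blast
  have const: "condQ K x s = y" if s: "a < s" "s < condF K x y" for s
  proof -
    have s01: "0 < s" "s < 1"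
      using s condF_le_1[of y] \<open>0 \<le> a\<close> by linarith+
    have "condF K x \<alpha> \<le> a" if "\<alpha> < y" for \<alpha>
      unfolding condF_def a_def using that by (intro Kx.finite_measure_mono) auto
    then have "y \<le> condQ K x s"
      using s by (intro le_condQ[OF s01]) (force simp: not_le[symmetric])
    then show ?thesis using condQ_le[OF s01 s(2)] by simp
  qed
  have "condQ K x t1 < condQ K x t2"
    using t1 t2 condF_le_1[of y] \<open>0 \<le> a\<close>
    by (intro strict_mono_onD[OF condQ_strict_mono[OF regular]]) auto
  then show False using const[of t1] const[of t2] t1 t2 by simp
qed

lemma isCont_condF: "isCont (condF K x) y"
  unfolding condF_eq_cdf Kx.isCont_cdf by (rule condF_no_atom)

lemma condF_le_iff:
  assumes t: "0 < t" "t < 1"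
  shows "condF K x y \<le> t \<longleftrightarrow> y \<le> condQ K x t"
  using less_condF_of_condQ_less[OF t, of y] condF_mono[of y "condQ K x t"] condF_condQ[OF t]
  by (cases "y \<le> condQ K x t") auto

lemma distr_condF: "distr (K x) borel (condF K x) = unif01"
proof (rule cdf_unique_except_point[OF _ real_distribution_unif01])
  show "real_distribution (distr (K x) borel (condF K x))"
    using borel_measurable_condF by (auto cong: measurable_cong_sets)
  fix t :: real assume "t \<noteq> 0"
  have "cdf (distr (K x) borel (condF K x)) t = measure (K x) {y. condF K x y \<le> t}"
    using borel_measurable_condF
    by (simp add: cdf_def measure_distr vimage_def cong: measurable_cong_sets)
  also have "\<dots> = max 0 (min 1 t)"
  proof -
    consider "t < 0" | "0 < t" "t < 1" | "1 \<le> t" using \<open>t \<noteq> 0\<close> by linarith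
    then show ?thesis
    proof cases
      case 1
      then have "{y. condF K x y \<le> t} = {}" using condF_nonneg
        by (auto simp: not_le intro: less_le_trans)
      then show ?thesis using 1 by simp
    next
      case 2
      then have "{y. condF K x y \<le> t} = {..condQ K x t}" by (auto simp: condF_le_iff)
      then show ?thesis using condF_condQ[OF 2] 2 by (simp add: condF_def)
    next
      case 3
      then have "{y. condF K x y \<le> t} = UNIV" using condF_le_1 by (auto intro: order_trans)
      then show ?thesis using 3 Kx.prob_space by simp
    qed
  qed
  finally show "cdf (distr (K x) borel (condF K x)) t = cdf unif01 t"
    by (simp add: cdf_unif01)
qed

end

end

lemma has_real_derivative_of_subgradient:
  fixes f g :: "real \<Rightarrow> real"
  assumes S: "open S" "t \<in> S"
    and subgradient: "\<And>w z. w \<in> S \<Longrightarrow> z \<in> S \<Longrightarrow> f w + g w * (z - w) \<le> f z"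
    and "isCont g t"
  shows "(f has_real_derivative g t) (at t)"
proof -
  have bound: "\<bar>(f z - f t) / (z - t) - g t\<bar> \<le> \<bar>g z - g t\<bar>" if z: "z \<in> S" "z \<noteq> t" for z
  proof -
    have 1: "g t * (z - t) \<le> f z - f t" and 2: "f z - f t \<le> g z * (z - t)"
      using subgradient[OF S(2) z(1)] subgradient[OF z(1) S(2)] by (simp_all add: algebra_simps)
    show ?thesis
    proof (cases "t < z")
      case True
      with 1 2 have "g t \<le> (f z - f t) / (z - t)" "(f z - f t) / (z - t) \<le> g z"
        by (simp_all add: pos_le_divide_eq pos_divide_le_eq)
      then show ?thesis by linarith
    next
      case False
      with z 1 2 have "(f z - f t) / (z - t) \<le> g t" "g z \<le> (f z - f t) / (z - t)"
        by (simp_all add: neg_le_divide_eq neg_divide_le_eq)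
      then show ?thesis by linarith
    qed
  qed
  have "((\<lambda>z. \<bar>g z - g t\<bar>) \<longlongrightarrow> 0) (at t)"
    using \<open>isCont g t\<close> by (simp add: isCont_def LIM_zero tendsto_rabs_zero)
  then have "((\<lambda>z. (f z - f t) / (z - t) - g t) \<longlongrightarrow> 0) (at t)"
    by (rule Lim_null_comparison[rotated])
       (use eventually_at_in_open[OF S] in \<open>eventually_elim, use bound in auto\<close>)
  then show ?thesis by (simp add: has_field_derivative_iff LIM_zero_iff)
qed

lemma subgradient_eq_derivative:
  fixes f :: "real \<Rightarrow> real"
  assumes "(f has_real_derivative d) (at y)" and "\<And>z. f y + u * (z - y) \<le> f z"
  shows "u = d"
proof -
  have "((\<lambda>z. f z - u * z) has_real_derivative d - u) (at y)"
    using assms(1) by (auto intro!: derivative_eq_intros)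
  moreover have "\<forall>z. \<bar>y - z\<bar> < 1 \<longrightarrow> f y - u * y \<le> f z - u * z"
    using assms(2) by (simp add: algebra_simps)
  ultimately have "d - u = 0" by (rule DERIV_local_min[OF _ zero_less_one])
  then show ?thesis by simp
qed

lemma le_of_isCont_dense_le:
  fixes h :: "real \<Rightarrow> real"
  assumes "isCont h t" and dense: "\<And>d. 0 < d \<Longrightarrow> \<exists>s. \<bar>s - t\<bar> < d \<and> h s \<le> c"
  shows "h t \<le> c"
proof (rule ccontr)
  assume "\<not> h t \<le> c"
  then have "0 < h t - c" by simp
  then obtain d where d: "0 < d" "\<And>s. \<bar>s - t\<bar> < d \<Longrightarrow> \<bar>h s - h t\<bar> < h t - c"
    using \<open>isCont h t\<close> unfolding continuous_at_eps_delta dist_real_def by blast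
  from dense[OF d(1)] obtain s where "\<bar>s - t\<bar> < d" "h s \<le> c" by blast
  with d(2) show False by fastforce
qed

lemma le_of_le_add_small_mult:
  fixes a b c M :: real
  assumes "0 < c" and "\<And>s. 0 < s \<Longrightarrow> s \<le> c \<Longrightarrow> a \<le> b + s * M"
  shows "a \<le> b"
proof (rule tendsto_lowerbound)
  show "((\<lambda>s. b + s * M) \<longlongrightarrow> b) (at_right 0)"
    by (auto intro!: tendsto_eq_intros)
  show "\<forall>\<^sub>F s in at_right 0. a \<le> b + s * M"
    using assms by (auto simp: eventually_at_right_field intro!: exI[of _ c])
qed (simp add: trivial_limit_at_right_real)

section \<open>Legendre transforms over bounded sets\<close>

lemma Rats_Int_Icc_nonempty:
  assumes "a \<le> 0" "0 \<le> b"
  shows "\<rat> \<inter> {a..b::real} \<noteq> {}"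
proof -
  have "0 \<in> \<rat> \<inter> {a..b}" using assms by simp
  then show ?thesis by (metis emptyE)
qed

definition conjugate_on :: "real set \<Rightarrow> (real \<Rightarrow> real) \<Rightarrow> real \<Rightarrow> real" where
  "conjugate_on D h s = (SUP y\<in>D. s * y - h y)"

lemma conjugate_on_le:
  "D \<noteq> {} \<Longrightarrow> (\<And>y. y \<in> D \<Longrightarrow> s * y - h y \<le> B) \<Longrightarrow> conjugate_on D h s \<le> B"
  unfolding conjugate_on_def by (rule cSUP_least)

context
  fixes D :: "real set" and h :: "real \<Rightarrow> real" and R c :: real
  assumes bounded: "\<And>y. y \<in> D \<Longrightarrow> \<bar>y\<bar> \<le> R" and lower: "\<And>y. y \<in> D \<Longrightarrow> c \<le> h y"
begin

lemma bdd_above_conjugate_on: "bdd_above ((\<lambda>y. s * y - h y) ` D)"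
proof (rule bdd_aboveI2)
  fix y assume y: "y \<in> D"
  have "s * y \<le> \<bar>s\<bar> * R"
    using bounded[OF y] abs_ge_self[of "s * y"] mult_left_mono[of "\<bar>y\<bar>" R "\<bar>s\<bar>"]
    by (simp add: abs_mult)
  then show "s * y - h y \<le> \<bar>s\<bar> * R - c" using lower[OF y] by linarith
qed

lemma conjugate_on_ge: "y \<in> D \<Longrightarrow> s * y - h y \<le> conjugate_on D h s"
  unfolding conjugate_on_def by (rule cSUP_upper[OF _ bdd_above_conjugate_on])

lemma conjugate_on_lipschitz:
  assumes "D \<noteq> {}"
  shows "conjugate_on D h s \<le> conjugate_on D h s' + R * \<bar>s - s'\<bar>"
proof (rule conjugate_on_le[OF assms])
  fix y assume y: "y \<in> D"
  have "(s - s') * y \<le> \<bar>s - s'\<bar> * R"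
    using bounded[OF y] abs_ge_self[of "(s - s') * y"] mult_left_mono[of "\<bar>y\<bar>" R "\<bar>s - s'\<bar>"]
    by (simp add: abs_mult)
  then show "s * y - h y \<le> conjugate_on D h s' + R * \<bar>s - s'\<bar>"
    using conjugate_on_ge[OF y, of s'] by (simp add: algebra_simps)
qed

lemma continuous_conjugate_on:
  assumes "D \<noteq> {}"
  shows "continuous_on A (conjugate_on D h)"
proof (rule continuous_on_subset[OF _ subset_UNIV], rule lipschitz_on_continuous_on)
  show "R-lipschitz_on UNIV (conjugate_on D h)"
  proof (rule lipschitz_onI)
    fix s s' :: real
    show "dist (conjugate_on D h s) (conjugate_on D h s') \<le> R * dist s s'"
      using conjugate_on_lipschitz[OF assms, of s s'] conjugate_on_lipschitz[OF assms, of s' s]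
      by (simp add: dist_real_def abs_le_iff abs_minus_commute)
    show "0 \<le> R" using assms bounded by force
  qed
qed

end

lemma borel_measurable_conjugate_on:
  assumes "countable D" and h: "\<And>y. y \<in> D \<Longrightarrow> (\<lambda>p. h p y) \<in> borel_measurable M"
    and s: "s \<in> borel_measurable M"
    and bdd: "\<And>p. p \<in> space M \<Longrightarrow> bdd_above ((\<lambda>y. s p * y - h p y) ` D)"
  shows "(\<lambda>p. conjugate_on D (h p) (s p)) \<in> borel_measurable M"
  unfolding conjugate_on_def using assms by measurable

lemma conjugate_on_rat_ge:
  assumes "a < b" and h: "continuous_on {a..b} h" and q: "q \<in> {a..b}"
    and bdd: "bdd_above ((\<lambda>y. s * y - h y) ` (\<rat> \<inter> {a..b}))"
  shows "s * q - h q \<le> conjugate_on (\<rat> \<inter> {a..b}) h s"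
proof -
  have "closure ({a<..<b} \<inter> \<rat>) = {a..b}"
    using closure_open_Int_superset[of "{a<..<b}" \<rat>] \<open>a < b\<close> by (simp add: Rats_closure_real)
  moreover have "{a<..<b} \<inter> \<rat> \<subseteq> \<rat> \<inter> {a..b}" by auto
  ultimately have "q \<in> closure (\<rat> \<inter> {a..b})"
    using q closure_mono by blast
  then obtain r where r: "\<And>n. r n \<in> \<rat> \<inter> {a..b}" "r \<longlonglongrightarrow> q"
    unfolding closure_sequential by blast
  have "continuous_on {a..b} (\<lambda>y. s * y - h y)"
    using h by (intro continuous_intros)
  then have "(\<lambda>n. s * r n - h (r n)) \<longlonglongrightarrow> s * q - h q"
    using continuous_on_tendsto_compose[OF _ r(2) q] r(1) by (simp add: o_def)
  moreover have "\<forall>n. s * r n - h (r n) \<le> conjugate_on (\<rat> \<inter> {a..b}) h s"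
    unfolding conjugate_on_def using cSUP_upper[OF r(1) bdd] by simp
  ultimately show ?thesis by (intro LIMSEQ_le_const2) auto
qed

text \<open>\<open>integrated_cdf P y = \<integral>\<^sub>-\<^sub>\<infinity>\<^sup>y cdf P\<close>, written as the nonnegative integral of
  \<open>(y - w)\<^sup>+\<close> so that it is jointly measurable when \<open>P\<close> is given by a kernel.\<close>

definition integrated_cdf :: "real measure \<Rightarrow> real \<Rightarrow> real" where
  "integrated_cdf P y = enn2real (\<integral>\<^sup>+w. ennreal (max 0 (y - w)) \<partial>P)"

lemma integrated_cdf_nonneg: "0 \<le> integrated_cdf P y"
  by (simp add: integrated_cdf_def)

context
  fixes P :: "real measure" and R :: real
  assumes real_distribution: "real_distribution P" and bounded: "AE w in P. \<bar>w\<bar> \<le> R"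
begin

interpretation P: real_distribution P by (fact real_distribution)

lemma integrable_positive_part: "integrable P (\<lambda>w. max 0 (y - w))"
  by (rule P.integrable_const_bound[where B="\<bar>y\<bar> + R"]) (use bounded in \<open>eventually_elim, auto\<close>)

lemma integrated_cdf_eq_integral: "integrated_cdf P y = (\<integral>w. max 0 (y - w) \<partial>P)"
  unfolding integrated_cdf_def
  by (subst nn_integral_eq_integral[OF integrable_positive_part]) auto

lemma integrated_cdf_lipschitz: "\<bar>integrated_cdf P z - integrated_cdf P y\<bar> \<le> \<bar>z - y\<bar>"
proof -
  have "\<bar>integrated_cdf P z - integrated_cdf P y\<bar> = \<bar>\<integral>w. max 0 (z - w) - max 0 (y - w) \<partial>P\<bar>"
    by (simp add: integrated_cdf_eq_integral integrable_positive_part)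
  also have "\<dots> \<le> (\<integral>w. \<bar>z - y\<bar> \<partial>P)"
    by (rule integral_abs_bound_integral) (auto intro: integrable_positive_part)
  finally show ?thesis using P.prob_space by simp
qed

lemma continuous_on_integrated_cdf: "continuous_on A (integrated_cdf P)"
proof (rule continuous_on_subset[OF _ subset_UNIV], rule lipschitz_on_continuous_on)
  show "1-lipschitz_on UNIV (integrated_cdf P)"
    using integrated_cdf_lipschitz by (intro lipschitz_onI) (auto simp: dist_real_def)
qed

lemma integrated_cdf_subgradient:
  "integrated_cdf P y + cdf P y * (z - y) \<le> integrated_cdf P z"
proof -
  have ind: "integrable P (\<lambda>w. (z - y) * indicator {..y} w)"
    by (intro integrable_mult_right integrable_real_indicator) (auto simp: less_top[symmetric])
  have "(\<integral>w. max 0 (y - w) + (z - y) * indicator {..y} w \<partial>P) \<le> (\<integral>w. max 0 (z - w) \<partial>P)"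
    by (intro integral_mono integrable_positive_part Bochner_Integration.integrable_add ind)
       (auto simp: indicator_def)
  moreover have "(\<integral>w. max 0 (y - w) + (z - y) * indicator {..y} w \<partial>P) =
      (\<integral>w. max 0 (y - w) \<partial>P) + (z - y) * measure P {..y}"
    by (subst Bochner_Integration.integral_add[OF integrable_positive_part ind]) simp
  ultimately show ?thesis
    by (simp add: integrated_cdf_eq_integral cdf_def algebra_simps)
qed

lemma integrated_cdf_zero_le: "integrated_cdf P 0 \<le> R"
proof -
  have "AE w in P. max 0 (0 - w) \<le> R" using bounded by eventually_elim auto
  then have "(\<integral>w. max 0 (0 - w) \<partial>P) \<le> (\<integral>w. R \<partial>P)"
    by (intro integral_mono_AE integrable_positive_part) auto
  then show ?thesis using P.prob_space by (simp add: integrated_cdf_eq_integral)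
qed

lemma cdf_eq_1: "R \<le> y \<Longrightarrow> cdf P y = 1"
  unfolding cdf_def using bounded by (intro P.prob_eq_1[THEN iffD2]) (auto elim!: AE_mp)

lemma cdf_eq_0: "y < -R \<Longrightarrow> cdf P y = 0"
  unfolding cdf_def using bounded by (intro P.prob_eq_0[THEN iffD2]) (auto elim!: AE_mp)

end

text \<open>The optimal dual pair for a single law \<open>P\<close> supported in \<open>[-R, R]\<close>. The suprema range over
  rationals so that the potentials are Borel measurable when \<open>P\<close> is given by a kernel.\<close>

definition law_phi :: "real \<Rightarrow> real measure \<Rightarrow> real \<Rightarrow> real" where
  "law_phi R P = conjugate_on (\<rat> \<inter> {-R..R}) (integrated_cdf P)"

definition law_psi :: "real \<Rightarrow> real measure \<Rightarrow> real \<Rightarrow> real" where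
  "law_psi R P = conjugate_on (\<rat> \<inter> {0..1}) (law_phi R P)"

context
  fixes R :: real and P :: "real measure"
  assumes R: "0 < R"
begin

lemma law_phi_ge: "y \<in> \<rat> \<inter> {-R..R} \<Longrightarrow> u * y - integrated_cdf P y \<le> law_phi R P u"
  unfolding law_phi_def
  by (rule conjugate_on_ge[where R=R and c=0]) (auto simp: integrated_cdf_nonneg)

lemma law_phi_ge_neg: "- integrated_cdf P 0 \<le> law_phi R P u"
  using law_phi_ge[of 0 u] R by simp

lemma law_phi_le: "law_phi R P u \<le> \<bar>u\<bar> * R"
  unfolding law_phi_def
proof (rule conjugate_on_le)
  show "\<rat> \<inter> {-R..R} \<noteq> {}" using R by (intro Rats_Int_Icc_nonempty) auto
  fix y assume "y \<in> \<rat> \<inter> {-R..R}"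
  then have "\<bar>y\<bar> \<le> R" by auto
  then have "u * y \<le> \<bar>u\<bar> * R"
    using abs_ge_self[of "u * y"] mult_left_mono[of "\<bar>y\<bar>" R "\<bar>u\<bar>"] by (simp add: abs_mult)
  then show "u * y - integrated_cdf P y \<le> \<bar>u\<bar> * R" using integrated_cdf_nonneg[of P y] by linarith
qed

lemma continuous_on_law_phi: "continuous_on A (law_phi R P)"
  unfolding law_phi_def using R
  by (intro continuous_conjugate_on[where R=R and c=0])
    (auto simp: integrated_cdf_nonneg intro!: exI[of _ 0])

lemma bdd_above_law_psi: "bdd_above ((\<lambda>v. y * v - law_phi R P v) ` (\<rat> \<inter> {0..1}))"
  by (rule bdd_above_conjugate_on[where R=1 and c="- integrated_cdf P 0"])
    (auto intro: law_phi_ge_neg)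

lemma law_psi_ge: "v \<in> \<rat> \<inter> {0..1} \<Longrightarrow> y * v - law_phi R P v \<le> law_psi R P y"
  unfolding law_psi_def conjugate_on_def by (rule cSUP_upper[OF _ bdd_above_law_psi])

lemma law_psi_nonneg: "0 \<le> law_psi R P y"
proof -
  have "y * 0 - law_phi R P 0 \<le> law_psi R P y" by (rule law_psi_ge) simp
  then show ?thesis using law_phi_le[of 0] by simp
qed

lemma law_psi_le: "law_psi R P y \<le> \<bar>y\<bar> + integrated_cdf P 0"
  unfolding law_psi_def
proof (rule conjugate_on_le)
  show "\<rat> \<inter> {0..1::real} \<noteq> {}" by (intro Rats_Int_Icc_nonempty) auto
  fix v :: real assume "v \<in> \<rat> \<inter> {0..1}"
  then have "0 \<le> v" "v \<le> 1" by auto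
  then have "y * v \<le> \<bar>y\<bar>"
    using mult_right_mono[OF abs_ge_self[of y], of v] mult_left_le[of v "\<bar>y\<bar>"] by linarith
  then show "y * v - law_phi R P v \<le> \<bar>y\<bar> + integrated_cdf P 0" using law_phi_ge_neg[of v]
    by linarith
qed

lemma law_potentials_feasible:
  assumes "u \<in> {0..1}"
  shows "u * y \<le> law_phi R P u + law_psi R P y"
  using conjugate_on_rat_ge[OF zero_less_one continuous_on_law_phi assms bdd_above_law_psi[of y]]
  unfolding law_psi_def by (simp add: mult.commute)

end

context
  fixes K :: "'a \<Rightarrow> real measure" and x :: 'a and R :: real
  assumes real_distribution: "real_distribution (K x)"
    and regular: "regular_quantile K x"
    and R: "0 < R" and bounded: "AE w in K x. \<bar>w\<bar> \<le> R"
begin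

lemma condQ_bounds:
  assumes t: "0 < t" "t < 1"
  shows "-R \<le> condQ K x t \<and> condQ K x t \<le> R"
  using condF_condQ[OF real_distribution regular t] t
    cdf_eq_0[OF real_distribution bounded, of "condQ K x t"]
    cdf_eq_1[OF real_distribution bounded, of "condQ K x t"]
  by (force simp: condF_eq_cdf[of K x, OF real_distribution])

lemma law_phi_ge_real: "q \<in> {-R..R} \<Longrightarrow> v * q - integrated_cdf (K x) q \<le> law_phi R (K x) v"
  unfolding law_phi_def using R
  by (intro conjugate_on_rat_ge continuous_on_integrated_cdf[OF real_distribution bounded]
        bdd_above_conjugate_on[where R=R and c=0]) (auto simp: integrated_cdf_nonneg)

lemma law_phi_condQ:
  assumes t: "0 < t" "t < 1"
  shows "law_phi R (K x) t = t * condQ K x t - integrated_cdf (K x) (condQ K x t)"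
proof (rule antisym)
  let ?q = "condQ K x t"
  show "law_phi R (K x) t \<le> t * ?q - integrated_cdf (K x) ?q"
    unfolding law_phi_def
  proof (rule conjugate_on_le)
    show "\<rat> \<inter> {-R..R} \<noteq> {}" using R by (intro Rats_Int_Icc_nonempty) auto
    fix y
    have "integrated_cdf (K x) ?q + t * (y - ?q) \<le> integrated_cdf (K x) y"
      using integrated_cdf_subgradient[OF real_distribution bounded, of ?q y]
        condF_condQ[OF real_distribution regular t]
      by (simp add: condF_eq_cdf[of K x, OF real_distribution])
    then show "t * y - integrated_cdf (K x) y \<le> t * ?q - integrated_cdf (K x) ?q"
      by (simp add: algebra_simps)
  qed
  show "t * ?q - integrated_cdf (K x) ?q \<le> law_phi R (K x) t"
    using condQ_bounds[OF t] by (intro law_phi_ge_real) auto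
qed

lemma law_potentials_condQ:
  assumes t: "0 < t" "t < 1"
  shows "law_phi R (K x) t + law_psi R (K x) (condQ K x t) = t * condQ K x t"
proof (rule antisym)
  let ?q = "condQ K x t"
  have "law_psi R (K x) ?q \<le> t * ?q - law_phi R (K x) t"
    unfolding law_psi_def
  proof (rule conjugate_on_le)
    show "\<rat> \<inter> {0..1::real} \<noteq> {}" by (intro Rats_Int_Icc_nonempty) auto
    fix v
    have "v * ?q - integrated_cdf (K x) ?q \<le> law_phi R (K x) v"
      using condQ_bounds[OF t] by (intro law_phi_ge_real) auto
    then show "?q * v - law_phi R (K x) v \<le> t * ?q - law_phi R (K x) t"
      using law_phi_condQ[OF t] by (simp add: algebra_simps)
  qed
  then show "law_phi R (K x) t + law_psi R (K x) ?q \<le> t * ?q" by simp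
  show "t * ?q \<le> law_phi R (K x) t + law_psi R (K x) ?q"
    using t R by (intro law_potentials_feasible) auto
qed

lemma abs_law_phi_le: "u \<in> {0..1} \<Longrightarrow> \<bar>law_phi R (K x) u\<bar> \<le> R"
  using law_phi_le[OF R, of "K x" u] law_phi_ge_neg[OF R, of "K x" u]
    integrated_cdf_zero_le[OF real_distribution bounded]
      mult_right_mono[OF _ less_imp_le[OF R], of u 1]
  by (auto simp: abs_le_iff)

end

section \<open>Conjugate pairs on a fibre\<close>

context
  fixes f g :: "real \<Rightarrow> real"
  assumes g_conj: "\<forall>y. ereal (g y) = (SUP u\<in>{0..1}. ereal (u * y - f u))"
begin

lemma fenchel_young: "u \<in> {0..1} \<Longrightarrow> u * y - f u \<le> g y"
proof -
  assume "u \<in> {0..1}"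
  then have "ereal (u * y - f u) \<le> ereal (g y)"
    unfolding g_conj[rule_format] by (rule SUP_upper)
  then show ?thesis by simp
qed

lemma conjugate_le: "(\<And>u. u \<in> {0..1} \<Longrightarrow> u * y - f u \<le> c) \<Longrightarrow> g y \<le> c"
proof -
  assume "\<And>u. u \<in> {0..1} \<Longrightarrow> u * y - f u \<le> c"
  then have "ereal (g y) \<le> ereal c"
    unfolding g_conj[rule_format] by (intro SUP_least) simp
  then show ?thesis by simp
qed

lemma conjugate_mono: "y \<le> z \<Longrightarrow> g y \<le> g z"
proof (rule conjugate_le)
  fix u :: real assume "y \<le> z" "u \<in> {0..1}"
  then show "u * y - f u \<le> g z"
    using fenchel_young[of u z] mult_left_mono[of y z u] by simp
qed

lemma conjugate_lipschitz: "y \<le> z \<Longrightarrow> g z \<le> g y + (z - y)"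
proof (rule conjugate_le)
  fix u :: real assume "y \<le> z" "u \<in> {0..1}"
  then show "u * z - f u \<le> g y + (z - y)"
    using fenchel_young[of u y] mult_right_mono[of u 1 "z - y"] by (simp add: algebra_simps)
qed

lemma isCont_conjugate: "isCont g y"
proof (rule lipschitz_on_continuous_on[THEN continuous_on_interior, of 1 UNIV], rule lipschitz_onI)
  fix y z :: real
  show "dist (g y) (g z) \<le> 1 * dist y z"
    using conjugate_lipschitz[of y z] conjugate_lipschitz[of z y] conjugate_mono[of y z]
      conjugate_mono[of z y]
    by (cases "y \<le> z") (auto simp: dist_real_def abs_le_iff)
qed auto

end

context
  fixes K :: "'a \<Rightarrow> real measure" and x :: 'a and f g :: "real \<Rightarrow> real"
  assumes real_distribution: "real_distribution (K x)"
    and regular: "regular_quantile K x"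
    and f_conj: "\<forall>u\<in>{0..1}. ereal (f u) = (SUP y. ereal (u * y - g y))"
    and g_conj: "\<forall>y. ereal (g y) = (SUP u\<in>{0..1}. ereal (u * y - f u))"
    and slack: "AE y in K x. f (condF K x y) + g y = condF K x y * y"
begin

interpretation Kx: real_distribution "K x" by (fact real_distribution)

lemma isCont_condQ: "0 < t \<Longrightarrow> t < 1 \<Longrightarrow> isCont (condQ K x) t"
  using condQ_continuous[OF regular] by (simp add: continuous_on_eq_continuous_at)

text \<open>Since \<open>condF K x\<close> pushes \<open>K x\<close> to the uniform law, slack points are found at every level.\<close>

lemma slack_levels_dense:
  assumes t: "0 < t" "t < 1" and "0 < d"
  obtains y where "f (condF K x y) + g y = condF K x y * y" "0 < condF K x y" "condF K x y < 1"
    "\<bar>condF K x y - t\<bar> < d"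
proof -
  define e where "e = min d (min t (1 - t))"
  have e: "0 < e" "e \<le> d" "e \<le> t" "e \<le> 1 - t" using t \<open>0 < d\<close> by (auto simp: e_def)
  define A where "A = condF K x -` {t - e<..<t + e}"
  have A: "A \<in> sets (K x)"
    using measurable_sets[OF borel_measurable_condF[of K x, OF real_distribution], of "{t - e<..<t + e}"]
    by (simp add: A_def)
  have "measure (K x) A = measure (distr (K x) borel (condF K x)) {t - e<..<t + e}"
    using borel_measurable_condF[of K x, OF real_distribution] by (simp add: measure_distr A_def)
  also have "\<dots> = 2 * e"
    using e by (simp add: distr_condF[OF real_distribution regular] measure_unif01_Ioo)
  finally have not_null: "\<not> (AE y in K x. y \<notin> A)"
    using e A by (simp add: Kx.prob_eq_0[symmetric])
  have "\<exists>y\<in>A. f (condF K x y) + g y = condF K x y * y"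
  proof (rule ccontr)
    assume no_slack: "\<not> (\<exists>y\<in>A. f (condF K x y) + g y = condF K x y * y)"
    from slack have "AE y in K x. y \<notin> A" by eventually_elim (use no_slack in auto)
    with not_null show False by simp
  qed
  then obtain y where "y \<in> A" "f (condF K x y) + g y = condF K x y * y" by blast
  with e show ?thesis by (intro that) (auto simp: A_def abs_less_iff)
qed

lemma conjugate_subgradient_condQ:
  assumes t: "0 < t" "t < 1"
  shows "g (condQ K x t) + t * (z - condQ K x t) \<le> g z"
proof (rule le_of_isCont_dense_le[where h="\<lambda>s. g (condQ K x s) + s * (z - condQ K x s)"])
  show "isCont (\<lambda>s. g (condQ K x s) + s * (z - condQ K x s)) t"
    using isCont_condQ[OF t]
    by (auto intro!: continuous_intros isCont_o2[OF _ isCont_conjugate[OF g_conj]])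
  fix d :: real assume "0 < d"
  then obtain y where y: "f (condF K x y) + g y = condF K x y * y" "0 < condF K x y"
    "condF K x y < 1"
    "\<bar>condF K x y - t\<bar> < d"
    using slack_levels_dense[OF t] by blast
  have "condF K x y * z - f (condF K x y) \<le> g z"
    using y(2,3) by (intro fenchel_young[OF g_conj]) auto
  then show "\<exists>s. \<bar>s - t\<bar> < d \<and> g (condQ K x s) + s * (z - condQ K x s) \<le> g z"
    using y condQ_condF[OF real_distribution regular y(2,3)]
    by (intro exI[of _ "condF K x y"]) (auto simp: algebra_simps)
qed

lemma conjugate_condQ:
  assumes t: "0 < t" "t < 1"
  shows "f t + g (condQ K x t) = t * condQ K x t"
proof (rule antisym)
  have "ereal (f t) = (SUP y. ereal (t * y - g y))" using f_conj t by simp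
  also have "\<dots> \<le> ereal (t * condQ K x t - g (condQ K x t))"
    using conjugate_subgradient_condQ[OF t] by (intro SUP_least) (simp add: algebra_simps)
  finally show "f t + g (condQ K x t) \<le> t * condQ K x t" by simp
  show "t * condQ K x t \<le> f t + g (condQ K x t)"
    using fenchel_young[OF g_conj, of t "condQ K x t"] t by simp
qed

lemma has_real_derivative_condQ:
  assumes "0 < t" "t < 1"
  shows "(f has_real_derivative condQ K x t) (at t)"
proof (rule has_real_derivative_of_subgradient[of "{0<..<1}"])
  fix w z :: real assume "w \<in> {0<..<1}" "z \<in> {0<..<1}"
  then show "f w + condQ K x w * (z - w) \<le> f z"
    using conjugate_condQ[of w] fenchel_young[OF g_conj, of z "condQ K x w"]
    by (simp add: algebra_simps)
qed (use assms isCont_condQ in auto)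

text \<open>Where \<open>condF K x\<close> is \<open>0\<close> or \<open>1\<close>, the subgradient inequality is the limit of the one at
  \<open>condQ K x s\<close> as \<open>s\<close> tends to \<open>0\<close> or \<open>1\<close>; the values \<open>condQ K x s\<close> stay on one side of
  \<open>condQ K x (1/2)\<close>.\<close>

lemma conjugate_le_of_condF_eq_0:
  assumes "condF K x y = 0"
  shows "g y \<le> g z"
proof (rule le_of_le_add_small_mult[where c="1/2" and M="\<bar>z\<bar> + \<bar>condQ K x (1/2)\<bar>"])
  fix s :: real assume s: "0 < s" "s \<le> 1/2"
  have "y < condQ K x s"
    using condF_mono[of K x, OF real_distribution, of "condQ K x s" y]
      condF_condQ[OF real_distribution regular, of s] s assms
    by (cases "condQ K x s \<le> y") auto
  then have "g y \<le> g (condQ K x s)" by (simp add: conjugate_mono[OF g_conj])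
  moreover have "condQ K x s \<le> condQ K x (1/2)"
    using s by (intro strict_mono_on_leD[OF condQ_strict_mono[OF regular]]) auto
  then have "s * (condQ K x s - z) \<le> s * (\<bar>z\<bar> + \<bar>condQ K x (1/2)\<bar>)"
    using s by (intro mult_left_mono) auto
  ultimately show "g y \<le> g z + s * (\<bar>z\<bar> + \<bar>condQ K x (1/2)\<bar>)"
    using conjugate_subgradient_condQ[of s z] s by (simp add: algebra_simps)
qed simp

lemma conjugate_le_of_condF_eq_1:
  assumes "condF K x y = 1"
  shows "g y + (z - y) \<le> g z"
proof (rule le_of_le_add_small_mult[where c="1/2" and M="\<bar>z\<bar> + \<bar>condQ K x (1/2)\<bar>"])
  fix s :: real assume s: "0 < s" "s \<le> 1/2"
  have "condQ K x (1 - s) < y"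
    using condF_mono[of K x, OF real_distribution, of y "condQ K x (1 - s)"]
      condF_condQ[OF real_distribution regular, of "1 - s"] s assms
    by (cases "y \<le> condQ K x (1 - s)") auto
  then have "g y \<le> g (condQ K x (1 - s)) + (y - condQ K x (1 - s))"
    by (simp add: conjugate_lipschitz[OF g_conj])
  moreover have "condQ K x (1/2) \<le> condQ K x (1 - s)"
    using s by (intro strict_mono_on_leD[OF condQ_strict_mono[OF regular]]) auto
  then have "s * (z - condQ K x (1 - s)) \<le> s * (\<bar>z\<bar> + \<bar>condQ K x (1/2)\<bar>)"
    using s by (intro mult_left_mono) auto
  ultimately show "g y + (z - y) \<le> g z + s * (\<bar>z\<bar> + \<bar>condQ K x (1/2)\<bar>)"
    using conjugate_subgradient_condQ[of "1 - s" z] s by (simp add: algebra_simps)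
qed simp

lemma conjugate_subgradient_condF: "g y + condF K x y * (z - y) \<le> g z"
proof -
  consider "condF K x y = 0" | "0 < condF K x y" "condF K x y < 1" | "condF K x y = 1"
    using condF_nonneg[of K x y, OF real_distribution] condF_le_1[of K x y, OF real_distribution]
    by linarith
  then show ?thesis
  proof cases
    case 2
    then show ?thesis
      using conjugate_subgradient_condQ[OF 2, of z] condQ_condF[OF real_distribution regular 2] by simp
  qed (simp_all add: conjugate_le_of_condF_eq_0 conjugate_le_of_condF_eq_1)
qed

lemma has_real_derivative_condF: "(g has_real_derivative condF K x y) (at y)"
  by (rule has_real_derivative_of_subgradient[of UNIV])
     (auto intro: conjugate_subgradient_condF isCont_condF[OF real_distribution regular])

end

section \<open>Weak duality and complementary slackness\<close>

context
  fixes \<nu> :: "('a::euclidean_space \<times> real) measure" and m :: "'a measure"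
    and \<theta> :: "(('a \<times> real) \<times> real) measure"
  assumes primal: "primal_feasible \<nu> m \<theta>"
begin

lemma sets_primal [measurable_cong]: "sets \<theta> = sets borel"
  using primal by (simp add: primal_feasible_def)

lemma distr_primal_fst: "distr \<theta> borel fst = \<nu>"
  using primal by (simp add: primal_feasible_def)

lemma sets_marginal_xy: "sets \<nu> = sets borel"
  by (metis distr_primal_fst sets_distr)

lemma distr_primal_xu: "distr \<theta> borel (\<lambda>w. (fst (fst w), snd w)) = m \<Otimes>\<^sub>M unif01"
  using primal by (simp add: primal_feasible_def case_prod_unfold)

lemma sets_marginal_xu: "sets (m \<Otimes>\<^sub>M unif01) = sets borel"
  by (metis distr_primal_xu sets_distr)

lemma AE_primal_fst:
  assumes "AE z in \<nu>. P z"
  shows "AE w in \<theta>. P (fst w)"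
proof -
  have "AE z in distr \<theta> borel fst. P z" using assms by (simp only: distr_primal_fst)
  then show ?thesis by (rule AE_distrD[rotated]) (simp cong: measurable_cong_sets)
qed

lemma AE_primal_u:
  assumes prob_m: "prob_space m"
  shows "AE w in \<theta>. snd w \<in> {0..1}"
proof -
  interpret pair_sigma_finite m unif01
    using prob_m real_distribution_unif01
    by (intro pair_sigma_finite.intro prob_space_imp_sigma_finite)
      (auto simp: real_distribution_def)
  have "{p \<in> space (m \<Otimes>\<^sub>M unif01). snd p \<in> {0..1}} \<in> sets (m \<Otimes>\<^sub>M unif01)"
    using measurable_sets[OF measurable_snd[of m unif01], of "{0..1}"]
    by (simp add: sets_unif01 vimage_def Int_def conj_commute)
  then have "AE p in m \<Otimes>\<^sub>M unif01. snd p \<in> {0..1}"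
    using AE_unif01_Ioo by (intro AE_pair_measure) (auto elim: AE_mp)
  then show ?thesis
    unfolding distr_primal_xu[symmetric] by (subst (asm) AE_distr_iff) auto
qed

end

context
  fixes \<nu> :: "('a::euclidean_space \<times> real) measure" and m :: "'a measure"
    and \<theta> :: "(('a \<times> real) \<times> real) measure" and \<phi> \<psi> :: "'a \<Rightarrow> real \<Rightarrow> real"
  assumes primal: "primal_feasible \<nu> m \<theta>" and dual: "dual_feasible \<nu> m \<phi> \<psi>"
    and prob_m: "prob_space m" and integrable_Y: "integrable \<nu> snd"
begin

lemmas [simp] = measurable_cong_sets[OF sets_primal[OF primal] refl]

private abbreviation (input) gap :: "('a \<times> real) \<times> real \<Rightarrow> real" where
  "gap w \<equiv> \<phi> (fst (fst w)) (snd w) + \<psi> (fst (fst w)) (snd (fst w)) - snd w * snd (fst w)"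

lemma integrable_primal_\<phi>: "integrable \<theta> (\<lambda>w. \<phi> (fst (fst w)) (snd w))"
  and integral_primal_\<phi>: "(\<integral>w. \<phi> (fst (fst w)) (snd w) \<partial>\<theta>) = (\<integral>(x, u). \<phi> x u \<partial>(m \<Otimes>\<^sub>M unif01))"
proof -
  have "integrable (m \<Otimes>\<^sub>M unif01) (\<lambda>p. \<phi> (fst p) (snd p))"
    using dual by (simp add: dual_feasible_def case_prod_unfold)
  moreover have [measurable]: "(\<lambda>p. \<phi> (fst p) (snd p)) \<in> borel_measurable borel"
    using borel_measurable_integrable[OF calculation]
    by (simp add: measurable_cong_sets[OF sets_marginal_xu[OF primal] refl])
  ultimately show "integrable \<theta> (\<lambda>w. \<phi> (fst (fst w)) (snd w))"
    unfolding distr_primal_xu[OF primal, symmetric] by (subst (asm) integrable_distr_eq) auto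
  show "(\<integral>w. \<phi> (fst (fst w)) (snd w) \<partial>\<theta>) = (\<integral>(x, u). \<phi> x u \<partial>(m \<Otimes>\<^sub>M unif01))"
    unfolding distr_primal_xu[OF primal, symmetric] case_prod_unfold by (subst integral_distr) auto
qed

lemma integrable_primal_\<psi>: "integrable \<theta> (\<lambda>w. \<psi> (fst (fst w)) (snd (fst w)))"
  and integral_primal_\<psi>: "(\<integral>w. \<psi> (fst (fst w)) (snd (fst w)) \<partial>\<theta>) = (\<integral>(x, y). \<psi> x y \<partial>\<nu>)"
proof -
  have "integrable \<nu> (\<lambda>p. \<psi> (fst p) (snd p))"
    using dual by (simp add: dual_feasible_def case_prod_unfold)
  moreover have [measurable]: "(\<lambda>p. \<psi> (fst p) (snd p)) \<in> borel_measurable borel"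
    using borel_measurable_integrable[OF calculation]
    by (simp add: measurable_cong_sets[OF sets_marginal_xy[OF primal] refl])
  ultimately show "integrable \<theta> (\<lambda>w. \<psi> (fst (fst w)) (snd (fst w)))"
    unfolding distr_primal_fst[OF primal, symmetric] by (subst (asm) integrable_distr_eq) auto
  show "(\<integral>w. \<psi> (fst (fst w)) (snd (fst w)) \<partial>\<theta>) = (\<integral>(x, y). \<psi> x y \<partial>\<nu>)"
    unfolding distr_primal_fst[OF primal, symmetric] case_prod_unfold by (subst integral_distr) auto
qed

lemma integrable_primal_uy: "integrable \<theta> (\<lambda>w. snd w * snd (fst w))"
proof (rule Bochner_Integration.integrable_bound)
  show "integrable \<theta> (\<lambda>w. snd (fst w))"
    using integrable_Y unfolding distr_primal_fst[OF primal, symmetric]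
    by (subst (asm) integrable_distr_eq) auto
  show "AE w in \<theta>. norm (snd w * snd (fst w)) \<le> norm (snd (fst w))"
    using AE_primal_u[OF primal prob_m]
    by eventually_elim (auto simp: abs_mult intro: mult_left_le_one_le)
qed (simp, measurable)

lemma integral_duality_gap: "(\<integral>w. gap w \<partial>\<theta>) = dual_value \<nu> m \<phi> \<psi> - primal_value \<theta>"
  using integrable_primal_\<phi> integrable_primal_\<psi> integrable_primal_uy
  by (simp add: integral_primal_\<phi> integral_primal_\<psi> dual_value_def primal_value_def case_prod_unfold)

lemma AE_duality_gap_nonneg: "AE w in \<theta>. 0 \<le> gap w"
  using AE_primal_u[OF primal prob_m]
  by eventually_elim (use dual in \<open>auto simp: dual_feasible_def\<close>)

lemma weak_duality: "primal_value \<theta> \<le> dual_value \<nu> m \<phi> \<psi>"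
  using integral_nonneg_AE[OF AE_duality_gap_nonneg] integral_duality_gap by simp

lemma complementary_slackness:
  assumes "dual_value \<nu> m \<phi> \<psi> \<le> primal_value \<theta>"
  shows "AE w in \<theta>. \<phi> (fst (fst w)) (snd w) + \<psi> (fst (fst w)) (snd (fst w)) = snd w * snd (fst w)"
proof -
  have "integrable \<theta> gap"
    using integrable_primal_\<phi> integrable_primal_\<psi> integrable_primal_uy by auto
  moreover have "(\<integral>w. gap w \<partial>\<theta>) = 0"
    using assms weak_duality integral_duality_gap by simp
  ultimately have "AE w in \<theta>. gap w = 0"
    using integral_nonneg_eq_0_iff_AE AE_duality_gap_nonneg by blast
  then show ?thesis by eventually_elim simp
qed

end

section \<open>The quantile regression model\<close>

locale quantile_regression_model =
  fixes M :: "'w measure" and X :: "'w \<Rightarrow> 'a::euclidean_space" and Y :: "'w \<Rightarrow> real"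
    and K :: "'a \<Rightarrow> real measure"
  assumes prob_space: "prob_space M"
    and X [measurable]: "X \<in> borel_measurable M" and Y [measurable]: "Y \<in> borel_measurable M"
    and compact_support: "\<exists>C. compact C \<and> (AE z in distr M borel (\<lambda>\<omega>. (X \<omega>, Y \<omega>)). z \<in> C)"
    and kernel: "K \<in> borel \<rightarrow>\<^sub>M prob_algebra borel"
    and disintegration: "\<forall>A\<in>sets borel. \<forall>B\<in>sets borel.
      measure (distr M borel (\<lambda>\<omega>. (X \<omega>, Y \<omega>))) (A \<times> B) =
      (\<integral>x. indicator A x * measure (K x) B \<partial>distr M borel X)"
    and regular_quantiles: "AE x in distr M borel X. regular_quantile K x"
begin

abbreviation law_XY :: "('a \<times> real) measure" where
  "law_XY \<equiv> distr M borel (\<lambda>\<omega>. (X \<omega>, Y \<omega>))"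

abbreviation law_X :: "'a measure" where
  "law_X \<equiv> distr M borel X"

interpretation M: prob_space M by (fact prob_space)

lemma prob_space_law_XY: "prob_space law_XY" and prob_space_law_X: "prob_space law_X"
  by (auto intro!: M.prob_space_distr)

lemma real_distribution_K: "real_distribution (K x)"
  using measurable_space[OF kernel, of x]
  by (simp add: space_prob_algebra real_distribution_def real_distribution_axioms_def)

interpretation K: real_distribution "K x" for x by (fact real_distribution_K)

lemma K_subprob [measurable]: "K \<in> borel \<rightarrow>\<^sub>M subprob_algebra borel"
  using kernel by (rule measurable_prob_algebraD)

lemma measurable_Pair_K: "Pair x \<in> K x \<rightarrow>\<^sub>M (borel :: ('a \<times> real) measure)"
  using real_distribution.events_eq_borel[OF real_distribution_K]
  by (simp cong: measurable_cong_sets)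

lemma measurable_fibres [measurable]:
  "(\<lambda>x. distr (K x) borel (Pair x)) \<in> borel \<rightarrow>\<^sub>M subprob_algebra (borel :: ('a \<times> real) measure)"
  by (rule measurable_distr2[where M=borel]) (auto simp: borel_prod[symmetric] case_prod_unfold)

lemma emeasure_fibre_Times:
  "emeasure (distr (K x) borel (Pair x)) (A \<times> B) = indicator A x * emeasure (K x) B"
  if "A \<in> sets borel" "B \<in> sets borel"
proof -
  have "A \<times> B \<in> sets (borel :: ('a \<times> real) measure)"
    using that by (simp add: borel_prod[symmetric])
  then show ?thesis
    using real_distribution.events_eq_borel[OF real_distribution_K, of x] that
    by (simp add: emeasure_distr[OF measurable_Pair_K] vimage_def indicator_def
        sets_eq_imp_space_eq[of "K x" borel])
qed

lemma law_XY_bind: "law_XY = law_X \<bind> (\<lambda>x. distr (K x) borel (Pair x))"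
proof (rule measure_eqI_generator_eq_countable[OF Int_stable_pair_measure_generator])
  interpret law_XY: prob_space law_XY by (fact prob_space_law_XY)
  interpret law_X: prob_space law_X by (fact prob_space_law_X)
  let ?E = "{A \<times> B |A B. A \<in> sets (borel :: 'a measure) \<and> B \<in> sets (borel :: real measure)}"
  have sets_E: "sets (borel :: ('a \<times> real) measure) = sigma_sets UNIV ?E"
    using sets_pair_measure[of "borel :: 'a measure" "borel :: real measure", unfolded borel_prod]
    by simp
  then show "sets law_XY = sigma_sets UNIV ?E" by simp
  show "sets (law_X \<bind> (\<lambda>x. distr (K x) borel (Pair x))) = sigma_sets UNIV ?E"
    using sets_E by (subst sets_bind[where N=borel]) auto
  show "?E \<subseteq> Pow UNIV" "countable {UNIV \<times> UNIV}" "\<Union> {UNIV \<times> UNIV} = UNIV" by auto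
  show "{UNIV \<times> UNIV} \<subseteq> ?E" by (auto intro!: exI[of _ UNIV])
  show "emeasure law_XY a \<noteq> \<infinity>" for a
    by simp
  fix Z assume "Z \<in> ?E"
  then obtain A B where Z: "Z = A \<times> B" and AB: "A \<in> sets borel" "B \<in> sets borel" by auto
  have "emeasure law_XY Z = ennreal (\<integral>x. indicator A x * measure (K x) B \<partial>law_X)"
    using disintegration AB by (simp add: Z law_XY.emeasure_eq_measure)
  also have "\<dots> = (\<integral>\<^sup>+x. ennreal (indicator A x * measure (K x) B) \<partial>law_X)"
  proof (rule nn_integral_eq_integral[symmetric])
    have "(\<lambda>x. measure (K x) B) \<in> borel_measurable borel"
      using AB by (intro measure_measurable_subprob_algebra2[where N=borel]) auto
    then show "integrable law_X (\<lambda>x. indicator A x * measure (K x) B)"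
      using AB by (intro law_X.integrable_const_bound[where B=1])
        (auto simp: indicator_def K.prob_le_1)
  qed auto
  also have "\<dots> = (\<integral>\<^sup>+x. emeasure (distr (K x) borel (Pair x)) Z \<partial>law_X)"
    using AB
    by (intro nn_integral_cong)
      (simp add: Z emeasure_fibre_Times K.emeasure_eq_measure split: split_indicator)
  also have "\<dots> = emeasure (law_X \<bind> (\<lambda>x. distr (K x) borel (Pair x))) Z"
    using AB measurable_fibres
    by (intro emeasure_bind[where N="borel :: ('a \<times> real) measure", symmetric])
       (auto simp: Z borel_prod[symmetric] cong: measurable_cong_sets)
  finally show "emeasure law_XY Z = emeasure (law_X \<bind> (\<lambda>x. distr (K x) borel (Pair x))) Z" .
qed

lemma AE_law_XY:
  assumes [measurable]: "Measurable.pred borel P"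
  shows "(AE z in law_XY. P z) \<longleftrightarrow> (AE x in law_X. AE y in K x. P (x, y))"
proof -
  have "(AE z in law_XY. P z) \<longleftrightarrow> (AE x in law_X. AE z in distr (K x) borel (Pair x). P z)"
    unfolding law_XY_bind by (rule AE_bind) measurable
  also have "\<dots> \<longleftrightarrow> (AE x in law_X. AE y in K x. P (x, y))"
    by (intro AE_cong AE_distr_iff[OF measurable_Pair_K]) simp
  finally show ?thesis .
qed

lemma distr_law_XY_fst: "distr law_XY borel fst = law_X"
  by (subst distr_distr) (auto simp: comp_def)

lemma AE_law_XY_fst:
  assumes "AE x in law_X. P x"
  shows "AE z in law_XY. P (fst z)"
proof -
  have "AE x in distr law_XY borel fst. P x" using assms by (simp only: distr_law_XY_fst)
  then show ?thesis by (rule AE_distrD[rotated]) simp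
qed

lemma borel_measurable_condF_kernel [measurable (raw)]:
  assumes "f \<in> borel_measurable N" "g \<in> borel_measurable N"
  shows "(\<lambda>w. condF K (f w) (g w)) \<in> borel_measurable N"
proof (rule borel_measurable_uncurried_compose[OF _ assms])
  have "Measurable.pred (borel \<Otimes>\<^sub>M borel) (\<lambda>p :: ('a \<times> real) \<times> real. snd p \<le> snd (fst p))"
    by measurable
  moreover have "(SIGMA z:space (borel :: ('a \<times> real) measure). {..snd z}) =
      {p \<in> space (borel \<Otimes>\<^sub>M borel). snd p \<le> snd (fst p)}"
    by (auto simp: space_pair_measure)
  ultimately have
    "(SIGMA z:space (borel :: ('a \<times> real) measure). {..snd z}) \<in> sets (borel \<Otimes>\<^sub>M borel)"
    by (simp add: Measurable.pred_def)
  then show "(\<lambda>z. condF K (fst z) (snd z)) \<in> borel_measurable (borel :: ('a \<times> real) measure)"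
    unfolding condF_def by (rule measure_measurable_subprob_algebra2) measurable
qed

definition rank :: "'w \<Rightarrow> real" where
  "rank \<omega> = condF K (X \<omega>) (Y \<omega>)"

lemma rank_measurable [measurable]: "rank \<in> borel_measurable M"
  unfolding rank_def[abs_def] by measurable

lemma sets_law_X_unif01: "sets (law_X \<Otimes>\<^sub>M unif01) = sets (borel :: ('a \<times> real) measure)"
  using sets_pair_measure_cong[of law_X borel unif01 borel] unfolding borel_prod
  by (simp add: sets_unif01)

lemma emeasure_fibre_condF:
  assumes "regular_quantile K x" and [measurable]: "A \<in> sets borel" "B \<in> sets borel"
  shows "emeasure (distr (K x) borel (Pair x)) {z. fst z \<in> A \<and> condF K (fst z) (snd z) \<in> B} =
    indicator A x * emeasure unif01 B"
proof -
  let ?S = "{z :: 'a \<times> real. fst z \<in> A \<and> condF K (fst z) (snd z) \<in> B}"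
  have "emeasure (distr (K x) borel (Pair x)) ?S = emeasure (K x) (Pair x -` ?S \<inter> space (K x))"
    by (rule emeasure_distr[OF measurable_Pair_K]) measurable
  also have "Pair x -` ?S \<inter> space (K x) = (if x \<in> A then condF K x -` B else {})"
    by auto
  also have "emeasure (K x) \<dots> = indicator A x * emeasure (K x) (condF K x -` B)"
    by (simp split: split_indicator)
  also have "emeasure (K x) (condF K x -` B) = emeasure (distr (K x) borel (condF K x)) B"
    using borel_measurable_condF[of K x, OF real_distribution_K]
    by (simp add: emeasure_distr vimage_def)
  finally show ?thesis using assms by (simp add: distr_condF[of K, OF real_distribution_K])
qed

lemma distr_X_rank: "distr M borel (\<lambda>\<omega>. (X \<omega>, rank \<omega>)) = law_X \<Otimes>\<^sub>M unif01"
proof (rule pair_measure_eqI[symmetric])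
  interpret law_X: prob_space law_X by (fact prob_space_law_X)
  interpret U: real_distribution unif01 by (fact real_distribution_unif01)
  show "sigma_finite_measure law_X" "sigma_finite_measure unif01" by unfold_locales
  show "sets (law_X \<Otimes>\<^sub>M unif01) = sets (distr M borel (\<lambda>\<omega>. (X \<omega>, rank \<omega>)))"
    by (subst sets_law_X_unif01) simp
  fix A B assume "A \<in> sets law_X" "B \<in> sets unif01"
  then have A [measurable]: "A \<in> sets borel" and B [measurable]: "B \<in> sets borel"
    by (auto simp: sets_unif01)
  define S where "S = {z :: 'a \<times> real. fst z \<in> A \<and> condF K (fst z) (snd z) \<in> B}"
  have S [measurable]: "S \<in> sets borel" unfolding S_def by measurable
  have AB: "A \<times> B \<in> sets (borel :: ('a \<times> real) measure)"
    using pair_measureI[OF A B] unfolding borel_prod .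
  have "emeasure (distr M borel (\<lambda>\<omega>. (X \<omega>, rank \<omega>))) (A \<times> B) =
      emeasure M ((\<lambda>\<omega>. (X \<omega>, rank \<omega>)) -` (A \<times> B) \<inter> space M)"
    by (rule emeasure_distr[OF _ AB]) measurable
  also have "(\<lambda>\<omega>. (X \<omega>, rank \<omega>)) -` (A \<times> B) \<inter> space M = (\<lambda>\<omega>. (X \<omega>, Y \<omega>)) -` S \<inter> space M"
    by (auto simp: S_def rank_def)
  also have "emeasure M \<dots> = emeasure law_XY S"
    by (rule emeasure_distr[symmetric]) measurable
  also have "\<dots> = (\<integral>\<^sup>+x. emeasure (distr (K x) borel (Pair x)) S \<partial>law_X)"
    unfolding law_XY_bind by (intro emeasure_bind[where N=borel]) auto
  also have "\<dots> = (\<integral>\<^sup>+x. indicator A x * emeasure unif01 B \<partial>law_X)"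
    using regular_quantiles
    by (intro nn_integral_cong_AE) (auto elim!: AE_mp simp: S_def emeasure_fibre_condF)
  also have "\<dots> = emeasure law_X A * emeasure unif01 B"
    by (simp add: nn_integral_multc)
  finally show
    "emeasure law_X A * emeasure unif01 B = emeasure (distr M borel (\<lambda>\<omega>. (X \<omega>, rank \<omega>))) (A \<times> B)"
    by simp
qed

lemma distr_rank: "distr M borel rank = unif01"
proof (rule measure_eqI)
  interpret law_X: prob_space law_X by (fact prob_space_law_X)
  interpret U: real_distribution unif01 by (fact real_distribution_unif01)
  show "sets (distr M borel rank) = sets unif01" by (simp add: sets_unif01)
  fix B assume "B \<in> sets (distr M borel rank)"
  then have B: "B \<in> sets borel" by simp
  have "emeasure (distr M borel rank) B = emeasure (distr M borel (\<lambda>\<omega>. (X \<omega>, rank \<omega>))) (UNIV \<times> B)"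
    using B by (simp add: emeasure_distr borel_prod[symmetric] vimage_def)
  also have "\<dots> = emeasure unif01 B"
    using B law_X.emeasure_space_1
    by (simp add: distr_X_rank U.emeasure_pair_measure_Times sets_unif01)
  finally show "emeasure (distr M borel rank) B = emeasure unif01 B" .
qed

lemma AE_rank: "AE \<omega> in M. 0 < rank \<omega> \<and> rank \<omega> < 1 \<and> Y \<omega> = condQ K (X \<omega>) (rank \<omega>)"
proof -
  have "AE u in distr M borel rank. 0 < u \<and> u < 1"
    unfolding distr_rank by (fact AE_unif01_Ioo)
  then have "AE \<omega> in M. 0 < rank \<omega> \<and> rank \<omega> < 1"
    by (rule AE_distrD[OF rank_measurable])
  moreover have "AE \<omega> in M. regular_quantile K (X \<omega>)"
    using regular_quantiles by (rule AE_distrD[OF X])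
  ultimately show ?thesis
    by eventually_elim (auto simp: rank_def condQ_condF[of K, OF real_distribution_K])
qed

definition rank_coupling :: "(('a \<times> real) \<times> real) measure" where
  "rank_coupling = distr M borel (\<lambda>\<omega>. ((X \<omega>, Y \<omega>), rank \<omega>))"

lemma primal_feasible_rank_coupling: "primal_feasible law_XY law_X rank_coupling"
proof -
  have "distr rank_coupling borel (\<lambda>((x, y), u). (x, u)) = distr M borel (\<lambda>\<omega>. (X \<omega>, rank \<omega>))"
    unfolding rank_coupling_def case_prod_unfold by (subst distr_distr) (auto simp: comp_def)
  moreover have "distr rank_coupling borel fst = law_XY"
    unfolding rank_coupling_def by (subst distr_distr) (auto simp: comp_def)
  ultimately show ?thesis
    by (simp add: primal_feasible_def distr_X_rank rank_coupling_def M.prob_space_distr)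
qed

lemma support_bound: "\<exists>R>0. AE \<omega> in M. \<bar>Y \<omega>\<bar> \<le> R"
proof -
  obtain C where C: "compact C" "AE z in law_XY. z \<in> C" using compact_support by blast
  then obtain R where R: "0 < R" "\<And>z. z \<in> C \<Longrightarrow> norm z \<le> R"
    using compact_imp_bounded bounded_pos by metis
  have "AE \<omega> in M. (X \<omega>, Y \<omega>) \<in> C" by (rule AE_distrD[OF _ C(2)]) measurable
  then have "AE \<omega> in M. \<bar>Y \<omega>\<bar> \<le> R"
    by eventually_elim (use R(2) norm_snd_le order_trans in fastforce)
  with R(1) show ?thesis by blast
qed

lemma integrable_law_XY_snd: "integrable law_XY snd"
proof -
  interpret law_XY: prob_space law_XY by (fact prob_space_law_XY)
  obtain R where "AE \<omega> in M. \<bar>Y \<omega>\<bar> \<le> R" using support_bound by blast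
  then have "AE z in law_XY. \<bar>snd z\<bar> \<le> R" by (subst AE_distr_iff) auto
  then show ?thesis by (intro law_XY.integrable_const_bound[where B=R]) auto
qed

lemma borel_measurable_integrated_cdf_kernel [measurable (raw)]:
  assumes "f \<in> borel_measurable N" "g \<in> borel_measurable N"
  shows "(\<lambda>w. integrated_cdf (K (f w)) (g w)) \<in> borel_measurable N"
proof (rule borel_measurable_uncurried_compose[OF _ assms])
  have "(\<lambda>(z, w). ennreal (max 0 (snd z - w))) \<in> borel_measurable ((borel :: ('a \<times> real) measure) \<Otimes>\<^sub>M borel)"
    unfolding case_prod_beta by measurable
  then have "(\<lambda>z. \<integral>\<^sup>+w. ennreal (max 0 (snd z - w)) \<partial>K (fst z)) \<in> borel_measurable borel"
    by (rule nn_integral_measurable_subprob_algebra2) measurable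
  then show "(\<lambda>z. integrated_cdf (K (fst z)) (snd z)) \<in> borel_measurable borel"
    unfolding integrated_cdf_def by measurable
qed

lemma borel_measurable_law_phi [measurable (raw)]:
  assumes "f \<in> borel_measurable N" "g \<in> borel_measurable N"
  shows "(\<lambda>w. law_phi R (K (f w)) (g w)) \<in> borel_measurable N"
  unfolding law_phi_def
proof (rule borel_measurable_conjugate_on)
  show "countable (\<rat> \<inter> {-R..R})" by (blast intro: countable_subset[OF _ countable_rat])
qed (use assms in \<open>auto intro!: bdd_above_conjugate_on[where R=R and c=0] simp: integrated_cdf_nonneg\<close>)

lemma borel_measurable_law_psi [measurable (raw)]:
  assumes "0 < R" "f \<in> borel_measurable N" "g \<in> borel_measurable N"
  shows "(\<lambda>w. law_psi R (K (f w)) (g w)) \<in> borel_measurable N"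
  unfolding law_psi_def
proof (rule borel_measurable_conjugate_on)
  show "countable (\<rat> \<inter> {0..1::real})" by (blast intro: countable_subset[OF _ countable_rat])
qed (use assms bdd_above_law_psi[OF assms(1)] in auto)

context
  fixes R :: real
  assumes R: "0 < R" and Y_bounded: "AE \<omega> in M. \<bar>Y \<omega>\<bar> \<le> R"
begin

lemma AE_regular_bounded_fibre: "AE x in law_X. regular_quantile K x \<and> (AE y in K x. \<bar>y\<bar> \<le> R)"
proof -
  have "AE z in law_XY. \<bar>snd z\<bar> \<le> R"
    using Y_bounded by (subst AE_distr_iff) auto
  then have "AE x in law_X. AE y in K x. \<bar>y\<bar> \<le> R" by (subst (asm) AE_law_XY) auto
  with regular_quantiles show ?thesis by eventually_elim auto
qed

lemma AE_regular_bounded_fibre_X: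
  "AE \<omega> in M. regular_quantile K (X \<omega>) \<and> (AE y in K (X \<omega>). \<bar>y\<bar> \<le> R)"
  by (rule AE_distrD[OF X AE_regular_bounded_fibre])

lemma dual_feasible_law_potentials:
  "dual_feasible law_XY law_X (\<lambda>x. law_phi R (K x)) (\<lambda>x. law_psi R (K x))"
proof -
  have "integrable M (\<lambda>\<omega>. law_phi R (K (X \<omega>)) (rank \<omega>))"
  proof (rule M.integrable_const_bound[where B=R])
    show "AE \<omega> in M. norm (law_phi R (K (X \<omega>)) (rank \<omega>)) \<le> R"
      using AE_regular_bounded_fibre_X AE_rank
      by eventually_elim (auto intro!: abs_law_phi_le[of K, OF real_distribution_K _ R])
    show "(\<lambda>\<omega>. law_phi R (K (X \<omega>)) (rank \<omega>)) \<in> borel_measurable M"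
      by measurable
  qed
  then have phi: "integrable (law_X \<Otimes>\<^sub>M unif01) (\<lambda>(x, u). law_phi R (K x) u)"
    unfolding distr_X_rank[symmetric] case_prod_unfold by (subst integrable_distr_eq) auto
  have "integrable M (\<lambda>\<omega>. law_psi R (K (X \<omega>)) (Y \<omega>))"
  proof (rule M.integrable_const_bound[where B="2 * R"])
    show "AE \<omega> in M. norm (law_psi R (K (X \<omega>)) (Y \<omega>)) \<le> 2 * R"
      using AE_regular_bounded_fibre_X Y_bounded
    proof eventually_elim
      case (elim \<omega>)
      then have "integrated_cdf (K (X \<omega>)) 0 \<le> R"
        by (intro integrated_cdf_zero_le[OF real_distribution_K]) auto
      then show ?case
        using elim law_psi_nonneg[OF R] law_psi_le[OF R, of "K (X \<omega>)" "Y \<omega>"]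
        by (auto simp: abs_le_iff)
    qed
    show "(\<lambda>\<omega>. law_psi R (K (X \<omega>)) (Y \<omega>)) \<in> borel_measurable M"
      using R by measurable
  qed
  then have psi: "integrable law_XY (\<lambda>(x, y). law_psi R (K x) y)"
    unfolding case_prod_unfold using R by (subst integrable_distr_eq) auto
  show ?thesis
    unfolding dual_feasible_def using phi psi law_potentials_feasible[OF R] by blast
qed

lemma dual_value_law_potentials:
  "dual_value law_XY law_X (\<lambda>x. law_phi R (K x)) (\<lambda>x. law_psi R (K x)) = primal_value rank_coupling"
proof -
  let ?gap = "\<lambda>w. law_phi R (K (fst (fst w))) (snd w) + law_psi R (K (fst (fst w))) (snd (fst w))
    - snd w * snd (fst w)"
  note [measurable] = R
  have "AE \<omega> in M. ?gap ((X \<omega>, Y \<omega>), rank \<omega>) = 0"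
    using AE_regular_bounded_fibre_X AE_rank
    by eventually_elim (auto simp: law_potentials_condQ[of K, OF real_distribution_K _ R])
  then have "(\<integral>\<omega>. ?gap ((X \<omega>, Y \<omega>), rank \<omega>) \<partial>M) = 0"
    by (rule integral_eq_zero_AE)
  then have "(\<integral>w. ?gap w \<partial>rank_coupling) = 0"
    unfolding rank_coupling_def by (subst integral_distr) auto
  then show ?thesis
    using integral_duality_gap[OF primal_feasible_rank_coupling dual_feasible_law_potentials
        prob_space_law_X integrable_law_XY_snd]
    by simp
qed

end

end

locale quantile_regression_dual = quantile_regression_model M X Y K
  for M :: "'w measure" and X :: "'w \<Rightarrow> 'a::euclidean_space" and Y K +
  fixes \<phi> \<psi> :: "'a \<Rightarrow> real \<Rightarrow> real"
  assumes dual_optimal: "dual_optimal (distr M borel (\<lambda>\<omega>. (X \<omega>, Y \<omega>))) (distr M borel X) \<phi> \<psi>"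
    and conjugate: "AE x in distr M borel X.
      (\<forall>u\<in>{0..1}. ereal (\<phi> x u) = (SUP y. ereal (u * y - \<psi> x y))) \<and>
      (\<forall>y. ereal (\<psi> x y) = (SUP u\<in>{0..1}. ereal (u * y - \<phi> x u)))"
begin

lemma dual_feasible: "dual_feasible law_XY law_X \<phi> \<psi>"
  using dual_optimal by (simp add: dual_optimal_def)

lemma borel_measurable_\<phi> [measurable (raw)]:
  assumes "f \<in> borel_measurable N" "g \<in> borel_measurable N"
  shows "(\<lambda>w. \<phi> (f w) (g w)) \<in> borel_measurable N"
proof (rule borel_measurable_uncurried_compose[OF _ assms])
  have "integrable (law_X \<Otimes>\<^sub>M unif01) (\<lambda>z. \<phi> (fst z) (snd z))"
    using dual_feasible by (simp add: dual_feasible_def case_prod_unfold)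
  from borel_measurable_integrable[OF this]
  show "(\<lambda>z. \<phi> (fst z) (snd z)) \<in> borel_measurable borel"
    by (simp add: measurable_cong_sets[OF sets_law_X_unif01 refl])
qed

lemma borel_measurable_\<psi> [measurable (raw)]:
  assumes "f \<in> borel_measurable N" "g \<in> borel_measurable N"
  shows "(\<lambda>w. \<psi> (f w) (g w)) \<in> borel_measurable N"
proof (rule borel_measurable_uncurried_compose[OF _ assms])
  have "integrable law_XY (\<lambda>z. \<psi> (fst z) (snd z))"
    using dual_feasible by (simp add: dual_feasible_def case_prod_unfold)
  from borel_measurable_integrable[OF this]
  show "(\<lambda>z. \<psi> (fst z) (snd z)) \<in> borel_measurable borel"
    by (simp cong: measurable_cong_sets)
qed

lemma dual_value_eq_primal_value: "dual_value law_XY law_X \<phi> \<psi> = primal_value rank_coupling"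
proof (rule antisym)
  obtain R where R: "0 < R" "AE \<omega> in M. \<bar>Y \<omega>\<bar> \<le> R" using support_bound by blast
  show "dual_value law_XY law_X \<phi> \<psi> \<le> primal_value rank_coupling"
    using dual_optimal[unfolded dual_optimal_def, THEN conjunct2, rule_format,
        OF dual_feasible_law_potentials[OF R]] dual_value_law_potentials[OF R]
    by simp
  show "primal_value rank_coupling \<le> dual_value law_XY law_X \<phi> \<psi>"
    by (rule weak_duality[OF primal_feasible_rank_coupling dual_feasible prob_space_law_X
          integrable_law_XY_snd])
qed

lemma AE_fibre_slackness: "AE x in law_X. AE y in K x. \<phi> x (condF K x y) + \<psi> x y = condF K x y * y"
proof -
  have "AE w in rank_coupling. \<phi> (fst (fst w)) (snd w) + \<psi> (fst (fst w)) (snd (fst w)) = snd w * snd (fst w)"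
    using dual_value_eq_primal_value
    by (intro complementary_slackness[OF primal_feasible_rank_coupling dual_feasible prob_space_law_X
          integrable_law_XY_snd]) simp
  then have "AE \<omega> in M. \<phi> (X \<omega>) (rank \<omega>) + \<psi> (X \<omega>) (Y \<omega>) = rank \<omega> * Y \<omega>"
    unfolding rank_coupling_def by (subst (asm) AE_distr_iff) auto
  then have "AE z in law_XY. \<phi> (fst z) (condF K (fst z) (snd z)) + \<psi> (fst z) (snd z) =
      condF K (fst z) (snd z) * snd z"
    by (subst AE_distr_iff) (auto simp: rank_def)
  then show ?thesis by (subst (asm) AE_law_XY) auto
qed

lemma AE_derivatives: "AE x in law_X.
    (\<forall>t\<in>{0<..<1}. (\<phi> x has_real_derivative condQ K x t) (at t)) \<and>
    (\<forall>y. (\<psi> x has_real_derivative condF K x y) (at y))"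
  using regular_quantiles conjugate AE_fibre_slackness
  by eventually_elim
    (auto intro: has_real_derivative_condQ[of K, OF real_distribution_K]
      has_real_derivative_condF[of K, OF real_distribution_K])

context
  fixes \<theta> :: "(('a \<times> real) \<times> real) measure"
  assumes primal_optimal: "primal_optimal law_XY law_X \<theta>"
begin

lemma primal_feasible: "primal_feasible law_XY law_X \<theta>"
  using primal_optimal by (simp add: primal_optimal_def)

text \<open>Complementary slackness makes \<open>u\<close> a subgradient of \<open>\<psi> x\<close> at \<open>y\<close>, and
  \<open>\<psi> x\<close> is differentiable with derivative \<open>condF K x\<close>.\<close>

lemma AE_primal_optimal_rank: "AE w in \<theta>. snd w = condF K (fst (fst w)) (snd (fst w))"
proof -
  have "primal_value rank_coupling \<le> primal_value \<theta>"
    using primal_optimal primal_feasible_rank_coupling by (simp add: primal_optimal_def)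
  then have slack:
    "AE w in \<theta>. \<phi> (fst (fst w)) (snd w) + \<psi> (fst (fst w)) (snd (fst w)) = snd w * snd (fst w)"
    using dual_value_eq_primal_value
    by (intro complementary_slackness[OF primal_feasible dual_feasible prob_space_law_X
          integrable_law_XY_snd]) simp
  from slack AE_primal_fst[OF primal_feasible AE_law_XY_fst[OF AE_derivatives]]
    AE_primal_u[OF primal_feasible prob_space_law_X]
  show ?thesis
  proof eventually_elim
    case (elim w)
    obtain x y u where w: "w = ((x, y), u)" by (metis prod.collapse)
    have feasible: "u * z \<le> \<phi> x u + \<psi> x z" for z
      using dual_feasible elim(3) by (auto simp: w dual_feasible_def)
    have slack: "\<phi> x u + \<psi> x y = u * y" using elim(1) by (simp add: w)
    have subgradient: "\<psi> x y + u * (z - y) \<le> \<psi> x z" for z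
      using feasible[of z] slack unfolding right_diff_distrib by linarith
    have "(\<psi> x has_real_derivative condF K x y) (at y)" using elim(2) by (simp add: w)
    then show ?case using subgradient_eq_derivative[OF _ subgradient] by (simp add: w)
  qed
qed

lemma primal_optimal_eq_rank_coupling: "\<theta> = rank_coupling"
proof -
  have "\<theta> = distr \<theta> borel (\<lambda>w. w)"
    using sets_primal[OF primal_feasible] by (simp add: distr_id2)
  also have "\<dots> = distr \<theta> borel (\<lambda>w. (fst w, condF K (fst (fst w)) (snd (fst w))))"
    using AE_primal_optimal_rank sets_primal[OF primal_feasible]
    by (intro distr_cong_AE) (auto simp: prod_eq_iff cong: measurable_cong_sets elim!: AE_mp)
  also have "\<dots> = distr (distr \<theta> borel fst) borel (\<lambda>z. (z, condF K (fst z) (snd z)))"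
    using sets_primal[OF primal_feasible]
    by (subst distr_distr) (auto simp: comp_def cong: measurable_cong_sets)
  also have "\<dots> = rank_coupling"
    unfolding distr_primal_fst[OF primal_feasible] rank_coupling_def
    by (subst distr_distr) (auto simp: comp_def rank_def)
  finally show ?thesis .
qed

end

lemma rank_unique:
  assumes [measurable]: "V \<in> borel_measurable M"
    and "distr M borel (\<lambda>\<omega>. ((X \<omega>, Y \<omega>), V \<omega>)) = rank_coupling"
  shows "AE \<omega> in M. V \<omega> = rank \<omega>"
proof -
  have "AE w in rank_coupling. snd w = condF K (fst (fst w)) (snd (fst w))"
    unfolding rank_coupling_def by (subst AE_distr_iff) (auto simp: rank_def)
  then show ?thesis
    unfolding assms(2)[symmetric] by (subst (asm) AE_distr_iff) (auto simp: rank_def)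
qed

lemma AE_rank_derivative: "AE \<omega> in M. rank \<omega> \<in> {0<..<1} \<and>
    (\<phi> (X \<omega>) has_real_derivative Y \<omega>) (at (rank \<omega>)) \<and> Y \<omega> = condQ K (X \<omega>) (rank \<omega>)"
  using AE_rank AE_distrD[OF X AE_derivatives] by eventually_elim auto

end

theorem mainTheorem5:
  fixes M :: "'w measure"
    and X :: "'w \<Rightarrow> 'a::euclidean_space"
    and Y :: "'w \<Rightarrow> real"
    and K :: "'a \<Rightarrow> real measure"
    and \<phi> \<psi> :: "'a \<Rightarrow> real \<Rightarrow> real"
  defines "\<nu> \<equiv> distr M borel (\<lambda>\<omega>. (X \<omega>, Y \<omega>))"
    and "m \<equiv> distr M borel X"
  assumes M: "prob_space M" and nonat: "nonatomic M"
    and X: "X \<in> borel_measurable M" and Y: "Y \<in> borel_measurable M"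
    and compact_supp: "\<exists>C. compact C \<and> (AE z in \<nu>. z \<in> C)"
    and K_kernel: "K \<in> borel \<rightarrow>\<^sub>M prob_algebra borel"
    and disint: "\<forall>A\<in>sets borel. \<forall>B\<in>sets borel.
                   measure \<nu> (A \<times> B) = (\<integral>x. indicator A x * measure (K x) B \<partial>m)"
    and Q_reg: "AE x in m. continuous_on {0<..<1} (condQ K x) \<and> strict_mono_on {0<..<1} (condQ K x)"
    and no_hyperplane: "\<forall>\<alpha> (\<beta>::'a). measure M {\<omega>\<in>space M. Y \<omega> = \<alpha> + \<beta> \<bullet> X \<omega>} = 0"
    and dual_opt: "dual_optimal \<nu> m \<phi> \<psi>"
    and conj: "AE x in m.
        (\<forall>u\<in>{0..1}. ereal (\<phi> x u) = (SUP y. ereal (u * y - \<psi> x y))) \<and>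
        (\<forall>y. ereal (\<psi> x y) = (SUP u\<in>{0..1}. ereal (u * y - \<phi> x u)))"
  shows "(AE x in m. (\<forall>t\<in>{0<..<1}. (\<phi> x has_real_derivative condQ K x t) (at t)) \<and>
                     (\<forall>y. (\<psi> x has_real_derivative condF K x y) (at y)))
    \<and> (\<forall>\<theta>. primal_optimal \<nu> m \<theta> \<longrightarrow>
         (\<exists>U. U \<in> borel_measurable M \<and>
              distr M borel (\<lambda>\<omega>. ((X \<omega>, Y \<omega>), U \<omega>)) = \<theta> \<and>
              (\<forall>V. V \<in> borel_measurable M \<and> distr M borel (\<lambda>\<omega>. ((X \<omega>, Y \<omega>), V \<omega>)) = \<theta>
                   \<longrightarrow> (AE \<omega> in M. V \<omega> = U \<omega>)) \<and>
              distr M borel U = unif01 \<and>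
              distr M borel (\<lambda>\<omega>. (X \<omega>, U \<omega>)) = m \<Otimes>\<^sub>M unif01 \<and>
              (AE \<omega> in M. U \<omega> = condF K (X \<omega>) (Y \<omega>)) \<and>
              (AE \<omega> in M. U \<omega> \<in> {0<..<1} \<and>
                   (\<phi> (X \<omega>) has_real_derivative Y \<omega>) (at (U \<omega>)) \<and>
                   Y \<omega> = condQ K (X \<omega>) (U \<omega>))))"
proof -
  interpret quantile_regression_dual M X Y K \<phi> \<psi>
    using M X Y compact_supp K_kernel disint Q_reg dual_opt conj unfolding \<nu>_def m_def
    by (simp add: quantile_regression_dual_def quantile_regression_model_def
        quantile_regression_dual_axioms_def regular_quantile_def)
  show ?thesis
  proof (intro conjI allI impI exI[of _ rank])
    show "AE x in m. (\<forall>t\<in>{0<..<1}. (\<phi> x has_real_derivative condQ K x t) (at t)) \<and>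
        (\<forall>y. (\<psi> x has_real_derivative condF K x y) (at y))"
      using AE_derivatives unfolding m_def by blast
    fix \<theta> assume "primal_optimal \<nu> m \<theta>"
    then have \<theta>: "\<theta> = rank_coupling"
      by (intro primal_optimal_eq_rank_coupling) (simp add: \<nu>_def m_def)
    show "distr M borel (\<lambda>\<omega>. ((X \<omega>, Y \<omega>), rank \<omega>)) = \<theta>"
      by (simp add: \<theta> rank_coupling_def)
    show "AE \<omega> in M. V \<omega> = rank \<omega>"
      if "V \<in> borel_measurable M \<and> distr M borel (\<lambda>\<omega>. ((X \<omega>, Y \<omega>), V \<omega>)) = \<theta>" for V
      using that by (intro rank_unique) (simp_all add: \<theta>)
    show "AE \<omega> in M. rank \<omega> \<in> {0<..<1} \<and> (\<phi> (X \<omega>) has_real_derivative Y \<omega>) (at (rank \<omega>)) \<and>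
        Y \<omega> = condQ K (X \<omega>) (rank \<omega>)"
      by (fact AE_rank_derivative)
  qed (simp_all add: m_def rank_def[symmetric] distr_rank distr_X_rank)
qed

end
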